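(* Let $q$ be the morphism on the alphabet $\{0,1,\ldots,21\}$ and $\gamma$ the coding to $\{0,1\}$ defined by (letters in images separated by commas): $q(0)=0,1$; $q(1)=2,3$; $q(2)=4,5$; $q(3)=6,7$; $q(4)=8,9$; $q(5)=10,11$; $q(6)=12,7$; $q(7)=8,9$; $q(8)=13,14$; $q(9)=15,1$; $q(10)=2,16$; $q(11)=7,17$; $q(12)=6,4$; $q(13)=2,16$; $q(14)=18,19$; $q(15)=0,1$; $q(16)=6,7$; $q(17)=10,11$; $q(18)=20,9$; $q(19)=10,21$; $q(20)=13,14$; $q(21)=18,19$; $\gamma(i)=1$ for $i\in\{0,1,3,6,7,11,12,13,14,17,19,20\}$ and $\gamma(i)=0$ for $i\in\{2,4,5,8,9,10,15,16,18,21\}$. Then the infinite word $\gamma(q^\omega(0))=11010011000111001101001110001101000111010011000\cdots$ contains only three distinct squares: $0^2$, $1^2$, and $(10)^2$. It has total weight $44$.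
   Context: A square is a nonempty word $xx$; "containing" means as a factor. $q^\omega(0)$ is the infinite fixed point of $q$ starting with $0$. The weight of a morphism $h:\Sigma^*\to\Sigma^*$ is $\sum_{a\in\Sigma}|h(a)|$, and the weight of a $k$-automatic word is the weight of its defining $k$-uniform morphism (here $2\cdot 22=44$). *)

theory Defs
  imports Main
begin

definition q_table :: "nat list list" where
  "q_table = [[0,1],[2,3],[4,5],[6,7],[8,9],[10,11],[12,7],[8,9],[13,14],[15,1],
              [2,16],[7,17],[6,4],[2,16],[18,19],[0,1],[6,7],[10,11],[20,9],[10,21],
              [13,14],[18,19]]"

definition q :: "nat \<Rightarrow> nat list" where
  "q a = q_table ! a"

definition q_star :: "nat list \<Rightarrow> nat list" where
  "q_star xs = concat (map q xs)"

definition gamma :: "nat \<Rightarrow> nat" where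
  "gamma i = (if i \<in> {0,1,3,6,7,11,12,13,14,17,19,20} then 1 else 0)"

text \<open>The infinite fixed point q^omega(0): since q(0) = 0 1, the words q^n(0) form a
  chain of prefixes of length 2^n; its n-th letter is read off q^(n+1)(0).\<close>
definition q_omega :: "nat \<Rightarrow> nat" where
  "q_omega n = ((q_star ^^ Suc n) [0]) ! n"

definition factor_of :: "nat list \<Rightarrow> (nat \<Rightarrow> nat) \<Rightarrow> bool" where
  "factor_of x u \<longleftrightarrow> (\<exists>i. \<forall>j < length x. u (i + j) = x ! j)"

definition weight :: "nat \<Rightarrow> (nat \<Rightarrow> nat list) \<Rightarrow> nat" where
  "weight k h = (\<Sum>a<k. length (h a))"

end

theory Submission
  imports Defs
begin

(* Write u = q^omega(0). Squares of period less than 10 in gamma(u) are found by inspecting the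
   length-20 factors of u, which form a finite set closed under desubstitution. For longer squares
   we generalise: a pattern consists of three colorings of the alphabet, constraining the letter
   before a block, the letters of the block and the letter after it, each compared with the letter
   n positions later; a square of period n in gamma(u) is an occurrence of the initial pattern.
   Since q is 2-uniform, an occurrence of period 2m desubstitutes to an occurrence of period m of
   one of two derived patterns, and the patterns reachable from the initial one form a finite set.
   Periods 5 to 9 are excluded by inspecting the length-20 factors, and odd periods of at least 10
   because nine consecutive letters, seen through the colorings of these patterns, determine the
   parity of their position. By induction no pattern occurs with period at least 5. *)

section \<open>The fixed point of q\<close>

lemma nth_concat_map_uniform:
  assumes "\<forall>x\<in>set xs. length (h x) = k" and "j < k * length xs"
  shows "concat (map h xs) ! j = h (xs ! (j div k)) ! (j mod k)"
  using assms
proof (induction xs arbitrary: j)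
  case (Cons x xs)
  show ?case
  proof (cases "j < k")
    case True
    then show ?thesis
      using Cons.prems by (simp add: nth_append)
  next
    case False
    then have "concat (map h (x # xs)) ! j = concat (map h xs) ! (j - k)"
      using Cons.prems by (simp add: nth_append)
    also have "\<dots> = h (xs ! ((j - k) div k)) ! ((j - k) mod k)"
      using Cons False by (intro Cons.IH) auto
    also have "\<dots> = h ((x # xs) ! (j div k)) ! (j mod k)"
    proof -
      have "0 < k"
        using False Cons.prems(2) by (cases k) auto
      then show ?thesis
        using False by (simp add: le_div_geq le_mod_geq)
    qed
    finally show ?thesis .
  qed
qed simp

lemma length_concat_map_uniform:
  "\<forall>x\<in>set xs. length (h x) = k \<Longrightarrow> length (concat (map h xs)) = k * length xs"
  by (induction xs) auto

lemma q_table_wf: "length q_table = 22 \<and> (\<forall>xs\<in>set q_table. length xs = 2 \<and> (\<forall>a\<in>set xs. a < 22))"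
  by (simp add: q_table_def)

lemma length_q: "a < 22 \<Longrightarrow> length (q a) = 2"
  using q_table_wf by (simp add: q_def)

lemma q_less: "a < 22 \<Longrightarrow> b \<in> set (q a) \<Longrightarrow> b < 22"
  using q_table_wf by (auto simp: q_def)

lemma q_star_less: "\<forall>a\<in>set xs. a < 22 \<Longrightarrow> \<forall>b\<in>set (q_star xs). b < 22"
  by (auto simp: q_star_def dest: q_less)

lemma length_q_star: "\<forall>a\<in>set xs. a < 22 \<Longrightarrow> length (q_star xs) = 2 * length xs"
  unfolding q_star_def by (rule length_concat_map_uniform) (simp add: length_q)

lemma nth_q_star:
  "\<forall>a\<in>set xs. a < 22 \<Longrightarrow> j < 2 * length xs \<Longrightarrow> q_star xs ! j = q (xs ! (j div 2)) ! (j mod 2)"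
  unfolding q_star_def by (rule nth_concat_map_uniform) (auto simp: length_q)

lemma q_iter_less: "\<forall>a\<in>set ((q_star ^^ m) [0]). a < 22"
  by (induction m) (simp_all add: q_star_less)

lemma length_q_iter: "length ((q_star ^^ m) [0]) = 2 ^ m"
  by (induction m) (simp_all add: length_q_star q_iter_less)

lemma q_iter_Suc_prefix: "\<exists>zs. (q_star ^^ Suc m) [0] = (q_star ^^ m) [0] @ zs"
proof (induction m)
  case 0
  show ?case
    by (simp add: q_star_def q_def q_table_def)
next
  case (Suc m)
  then obtain zs where "(q_star ^^ Suc m) [0] = (q_star ^^ m) [0] @ zs" ..
  then have "(q_star ^^ Suc (Suc m)) [0] = (q_star ^^ Suc m) [0] @ q_star zs"
    by (simp add: q_star_def)
  then show ?case ..
qed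

lemma nth_q_iter_mono:
  assumes "m \<le> m'" and "n < 2 ^ m"
  shows "(q_star ^^ m') [0] ! n = (q_star ^^ m) [0] ! n"
  using assms(1)
proof (induction m' rule: dec_induct)
  case (step k)
  obtain zs where "(q_star ^^ Suc k) [0] = (q_star ^^ k) [0] @ zs"
    using q_iter_Suc_prefix ..
  moreover have "n < length ((q_star ^^ k) [0])"
  proof -
    have "(2::nat) ^ m \<le> 2 ^ k"
      using step.hyps(1) by (simp add: power_increasing)
    then show ?thesis
      using assms(2) length_q_iter[of k] by linarith
  qed
  ultimately show ?case
    using step.IH by (simp add: nth_append)
qed simp

lemma q_omega_eq_nth_q_iter: "n < 2 ^ m \<Longrightarrow> q_omega n = (q_star ^^ m) [0] ! n"
proof -
  assume "n < 2 ^ m"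
  moreover have "n < 2 ^ Suc n"
    using less_exp[of n] by (simp del: less_exp)
  ultimately show ?thesis
    unfolding q_omega_def by (metis max.cobounded1 max.cobounded2 nth_q_iter_mono)
qed

lemma q_omega_less: "q_omega n < 22"
proof -
  have "n < length ((q_star ^^ n) [0])"
    by (simp add: length_q_iter less_exp)
  then show ?thesis
    using q_omega_eq_nth_q_iter[OF less_exp] q_iter_less[of n] by simp
qed

lemma q_omega_div_mod: "q_omega j = q (q_omega (j div 2)) ! (j mod 2)"
proof -
  have j: "j < 2 * length ((q_star ^^ j) [0])"
    using less_exp[of j] by (simp add: length_q_iter del: less_exp)
  have "q_omega j = q_star ((q_star ^^ j) [0]) ! j"
    using less_exp[of "Suc j"] by (simp add: q_omega_def)
  also have "\<dots> = q ((q_star ^^ j) [0] ! (j div 2)) ! (j mod 2)"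
    using j q_iter_less by (rule nth_q_star[rotated])
  also have "(q_star ^^ j) [0] ! (j div 2) = q_omega (j div 2)"
    using j by (intro q_omega_eq_nth_q_iter[symmetric]) (simp add: length_q_iter)
  finally show ?thesis .
qed

(* The letters 0, ..., 21 are mirrored by the constructors L0, ..., L21, so that the finite checks
   below compare letters by constructor distinctness; code_simp is far slower on numerals. *)
datatype letter = L0 | L1 | L2 | L3 | L4 | L5 | L6 | L7 | L8 | L9 | L10 | L11 | L12 | L13
  | L14 | L15 | L16 | L17 | L18 | L19 | L20 | L21

definition letters :: "letter list" where
  "letters = [L0, L1, L2, L3, L4, L5, L6, L7, L8, L9, L10, L11, L12, L13, L14, L15, L16, L17,
    L18, L19, L20, L21]"

definition letter_of :: "nat \<Rightarrow> letter" where
  "letter_of a = letters ! a"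

fun letter_index :: "letter \<Rightarrow> nat" where
  "letter_index L0 = 0" | "letter_index L1 = 1" | "letter_index L2 = 2" | "letter_index L3 = 3"
| "letter_index L4 = 4" | "letter_index L5 = 5" | "letter_index L6 = 6" | "letter_index L7 = 7"
| "letter_index L8 = 8" | "letter_index L9 = 9" | "letter_index L10 = 10" | "letter_index L11 = 11"
| "letter_index L12 = 12" | "letter_index L13 = 13" | "letter_index L14 = 14" | "letter_index L15 = 15"
| "letter_index L16 = 16" | "letter_index L17 = 17" | "letter_index L18 = 18" | "letter_index L19 = 19"
| "letter_index L20 = 20" | "letter_index L21 = 21"

fun letter_subst :: "letter \<Rightarrow> letter list" where
  "letter_subst L0 = [L0, L1]" | "letter_subst L1 = [L2, L3]" | "letter_subst L2 = [L4, L5]"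
| "letter_subst L3 = [L6, L7]" | "letter_subst L4 = [L8, L9]" | "letter_subst L5 = [L10, L11]"
| "letter_subst L6 = [L12, L7]" | "letter_subst L7 = [L8, L9]" | "letter_subst L8 = [L13, L14]"
| "letter_subst L9 = [L15, L1]" | "letter_subst L10 = [L2, L16]" | "letter_subst L11 = [L7, L17]"
| "letter_subst L12 = [L6, L4]" | "letter_subst L13 = [L2, L16]" | "letter_subst L14 = [L18, L19]"
| "letter_subst L15 = [L0, L1]" | "letter_subst L16 = [L6, L7]" | "letter_subst L17 = [L10, L11]"
| "letter_subst L18 = [L20, L9]" | "letter_subst L19 = [L10, L21]" | "letter_subst L20 = [L13, L14]"
| "letter_subst L21 = [L18, L19]"

definition letter_substs :: "letter list \<Rightarrow> letter list" where
  "letter_substs xs = concat (map letter_subst xs)"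

definition letter_gamma :: "letter \<Rightarrow> nat" where
  "letter_gamma u = [1, 1, 0, 1, 0, 0, 1, 1, 0, 0, 0, 1, 1, 1, 1, 0, 0, 1, 0, 1, 1, 0] ! letter_index u"

lemma length_letters: "length letters = 22"
  by (simp add: letters_def)

lemma letter_in_letters: "u \<in> set letters"
  by (cases u) (simp_all add: letters_def)

lemma nth_letters_eq_iff: "i < 22 \<Longrightarrow> j < 22 \<Longrightarrow> letters ! i = letters ! j \<longleftrightarrow> i = j"
  by (simp add: letters_def nth_eq_iff_index_eq)

lemma letter_index_less: "letter_index u < 22"
  by (cases u) simp_all

lemma letter_of_index: "letter_of (letter_index u) = u"
  by (cases u) (simp_all add: letter_of_def letters_def)

lemma length_letter_subst: "length (letter_subst u) = 2"
  by (cases u) simp_all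

lemma letter_of_q_gamma:
  "\<forall>a\<in>set [0..<22]. letter_subst (letter_of a) = map letter_of (q a) \<and> gamma a = letter_gamma (letter_of a)"
  by code_simp

definition qword :: "nat \<Rightarrow> letter" where
  "qword k = letter_of (q_omega k)"

lemma qword_div_mod: "qword j = letter_subst (qword (j div 2)) ! (j mod 2)"
proof -
  have "j mod 2 < length (q (q_omega (j div 2)))"
    using length_q[OF q_omega_less] by simp
  then show ?thesis
    using letter_of_q_gamma q_omega_less[of "j div 2"]
    by (simp add: qword_def q_omega_div_mod[of j])
qed

lemma qword_double: "qword (2 * k) = letter_subst (qword k) ! 0"
  and qword_double_Suc: "qword (Suc (2 * k)) = letter_subst (qword k) ! 1"
  by (simp_all add: qword_div_mod[of "2 * k"] qword_div_mod[of "Suc (2 * k)"])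

lemma gamma_q_omega: "gamma (q_omega k) = letter_gamma (qword k)"
  using letter_of_q_gamma q_omega_less[of k] by (simp add: qword_def)

section \<open>Factors of the fixed point\<close>

definition window :: "nat \<Rightarrow> nat \<Rightarrow> letter list" where
  "window i k = map qword [i..<i + k]"

lemma length_window [simp]: "length (window i k) = k"
  by (simp add: window_def)

lemma nth_window [simp]: "j < k \<Longrightarrow> window i k ! j = qword (i + j)"
  by (simp add: window_def)

lemma take_drop_window: "r + k \<le> K \<Longrightarrow> take k (drop r (window i K)) = window (i + r) k"
  by (simp add: window_def take_map drop_map add.assoc)

lemma length_letter_substs: "length (letter_substs xs) = 2 * length xs"
  unfolding letter_substs_def by (rule length_concat_map_uniform) (simp add: length_letter_subst)

lemma nth_letter_substs:
  "j < 2 * length xs \<Longrightarrow> letter_substs xs ! j = letter_subst (xs ! (j div 2)) ! (j mod 2)"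
  unfolding letter_substs_def by (rule nth_concat_map_uniform) (simp_all add: length_letter_subst)

lemma window_desubst: "window i k = take k (drop (i mod 2) (letter_substs (window (i div 2) k)))"
proof (rule nth_equalityI)
  fix j
  assume "j < length (window i k)"
  then have j: "j < k"
    by simp
  have "(i + j) div 2 = i div 2 + (i mod 2 + j) div 2" and "(i + j) mod 2 = (i mod 2 + j) mod 2"
    by presburger+
  moreover have "i mod 2 + j < 2 * k" and "(i mod 2 + j) div 2 < k"
    using j by linarith+
  ultimately show "window i k ! j = take k (drop (i mod 2) (letter_substs (window (i div 2) k))) ! j"
    using j by (simp add: length_letter_substs nth_letter_substs nth_drop qword_div_mod[of "i + j"])
qed (simp add: length_letter_substs)

lemma window_0_20: "window 0 20 = map letter_of (take 20 ((q_star ^^ 5) [0]))"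
proof (rule nth_equalityI)
  show "length (window 0 20) = length (map letter_of (take 20 ((q_star ^^ 5) [0])))"
    by (simp add: length_q_iter)
next
  fix j
  assume "j < length (window 0 20)"
  then show "window 0 20 ! j = map letter_of (take 20 ((q_star ^^ 5) [0])) ! j"
    by (simp add: qword_def q_omega_eq_nth_q_iter[of j 5] length_q_iter)
qed

(* The lists factors20, even_factors9, odd_factors9 and square_patterns below are certificates
   computed in advance; the lemmas checked by code_simp are all that is used about them. *)
definition factors20 :: "letter list list" where
  "factors20 =
   [[L0,L1,L2,L3,L4,L5,L6,L7,L8,L9,L10,L11,L12,L7,L8,L9,L13,L14,L15,L1],
    [L0,L1,L2,L3,L4,L5,L6,L7,L20,L9,L10,L21,L0,L1,L2,L3,L4,L5,L6,L7],
    [L1,L2,L3,L4,L5,L6,L7,L8,L9,L10,L11,L12,L7,L8,L9,L13,L14,L15,L1,L2],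
    [L1,L2,L3,L4,L5,L6,L7,L20,L9,L10,L21,L0,L1,L2,L3,L4,L5,L6,L7,L8],
    [L1,L2,L16,L7,L17,L6,L4,L8,L9,L13,L14,L15,L1,L2,L16,L18,L19,L0,L1,L2],
    [L1,L2,L16,L18,L19,L0,L1,L2,L3,L4,L5,L6,L7,L8,L9,L10,L11,L12,L7,L8],
    [L1,L2,L16,L18,L19,L0,L1,L2,L3,L4,L5,L6,L7,L20,L9,L10,L21,L0,L1,L2],
    [L2,L3,L4,L5,L6,L7,L8,L9,L10,L11,L12,L7,L8,L9,L13,L14,L15,L1,L2,L16],
    [L2,L3,L4,L5,L6,L7,L20,L9,L10,L21,L0,L1,L2,L3,L4,L5,L6,L7,L8,L9],
    [L2,L16,L7,L17,L6,L4,L8,L9,L13,L14,L15,L1,L2,L16,L18,L19,L0,L1,L2,L3],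
    [L2,L16,L18,L19,L0,L1,L2,L3,L4,L5,L6,L7,L8,L9,L10,L11,L12,L7,L8,L9],
    [L2,L16,L18,L19,L0,L1,L2,L3,L4,L5,L6,L7,L20,L9,L10,L21,L0,L1,L2,L3],
    [L3,L4,L5,L6,L7,L8,L9,L10,L11,L12,L7,L8,L9,L13,L14,L15,L1,L2,L16,L7],
    [L3,L4,L5,L6,L7,L8,L9,L10,L11,L12,L7,L8,L9,L13,L14,L15,L1,L2,L16,L18],
    [L3,L4,L5,L6,L7,L20,L9,L10,L21,L0,L1,L2,L3,L4,L5,L6,L7,L8,L9,L10],
    [L4,L5,L6,L7,L8,L9,L10,L11,L12,L7,L8,L9,L13,L14,L15,L1,L2,L16,L7,L17],
    [L4,L5,L6,L7,L8,L9,L10,L11,L12,L7,L8,L9,L13,L14,L15,L1,L2,L16,L18,L19],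
    [L4,L5,L6,L7,L20,L9,L10,L21,L0,L1,L2,L3,L4,L5,L6,L7,L8,L9,L10,L11],
    [L4,L8,L9,L13,L14,L15,L1,L2,L16,L18,L19,L0,L1,L2,L3,L4,L5,L6,L7,L8],
    [L4,L8,L9,L13,L14,L15,L1,L2,L16,L18,L19,L0,L1,L2,L3,L4,L5,L6,L7,L20],
    [L5,L6,L7,L8,L9,L10,L11,L12,L7,L8,L9,L13,L14,L15,L1,L2,L16,L7,L17,L6],
    [L5,L6,L7,L8,L9,L10,L11,L12,L7,L8,L9,L13,L14,L15,L1,L2,L16,L18,L19,L0],
    [L5,L6,L7,L20,L9,L10,L21,L0,L1,L2,L3,L4,L5,L6,L7,L8,L9,L10,L11,L12],
    [L6,L4,L8,L9,L13,L14,L15,L1,L2,L16,L18,L19,L0,L1,L2,L3,L4,L5,L6,L7],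
    [L6,L7,L8,L9,L10,L11,L12,L7,L8,L9,L13,L14,L15,L1,L2,L16,L7,L17,L6,L4],
    [L6,L7,L8,L9,L10,L11,L12,L7,L8,L9,L13,L14,L15,L1,L2,L16,L18,L19,L0,L1],
    [L6,L7,L20,L9,L10,L21,L0,L1,L2,L3,L4,L5,L6,L7,L8,L9,L10,L11,L12,L7],
    [L7,L8,L9,L10,L11,L12,L7,L8,L9,L13,L14,L15,L1,L2,L16,L7,L17,L6,L4,L8],
    [L7,L8,L9,L10,L11,L12,L7,L8,L9,L13,L14,L15,L1,L2,L16,L18,L19,L0,L1,L2],
    [L7,L8,L9,L13,L14,L15,L1,L2,L16,L7,L17,L6,L4,L8,L9,L13,L14,L15,L1,L2],
    [L7,L8,L9,L13,L14,L15,L1,L2,L16,L18,L19,L0,L1,L2,L3,L4,L5,L6,L7,L8],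
    [L7,L8,L9,L13,L14,L15,L1,L2,L16,L18,L19,L0,L1,L2,L3,L4,L5,L6,L7,L20],
    [L7,L17,L6,L4,L8,L9,L13,L14,L15,L1,L2,L16,L18,L19,L0,L1,L2,L3,L4,L5],
    [L7,L20,L9,L10,L21,L0,L1,L2,L3,L4,L5,L6,L7,L8,L9,L10,L11,L12,L7,L8],
    [L8,L9,L10,L11,L12,L7,L8,L9,L13,L14,L15,L1,L2,L16,L7,L17,L6,L4,L8,L9],
    [L8,L9,L10,L11,L12,L7,L8,L9,L13,L14,L15,L1,L2,L16,L18,L19,L0,L1,L2,L3],
    [L8,L9,L13,L14,L15,L1,L2,L16,L7,L17,L6,L4,L8,L9,L13,L14,L15,L1,L2,L16],
    [L8,L9,L13,L14,L15,L1,L2,L16,L18,L19,L0,L1,L2,L3,L4,L5,L6,L7,L8,L9],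
    [L8,L9,L13,L14,L15,L1,L2,L16,L18,L19,L0,L1,L2,L3,L4,L5,L6,L7,L20,L9],
    [L9,L10,L11,L12,L7,L8,L9,L13,L14,L15,L1,L2,L16,L7,L17,L6,L4,L8,L9,L13],
    [L9,L10,L11,L12,L7,L8,L9,L13,L14,L15,L1,L2,L16,L18,L19,L0,L1,L2,L3,L4],
    [L9,L10,L21,L0,L1,L2,L3,L4,L5,L6,L7,L8,L9,L10,L11,L12,L7,L8,L9,L13],
    [L9,L13,L14,L15,L1,L2,L16,L7,L17,L6,L4,L8,L9,L13,L14,L15,L1,L2,L16,L18],
    [L9,L13,L14,L15,L1,L2,L16,L18,L19,L0,L1,L2,L3,L4,L5,L6,L7,L8,L9,L10],
    [L9,L13,L14,L15,L1,L2,L16,L18,L19,L0,L1,L2,L3,L4,L5,L6,L7,L20,L9,L10],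
    [L10,L11,L12,L7,L8,L9,L13,L14,L15,L1,L2,L16,L7,L17,L6,L4,L8,L9,L13,L14],
    [L10,L11,L12,L7,L8,L9,L13,L14,L15,L1,L2,L16,L18,L19,L0,L1,L2,L3,L4,L5],
    [L10,L21,L0,L1,L2,L3,L4,L5,L6,L7,L8,L9,L10,L11,L12,L7,L8,L9,L13,L14],
    [L11,L12,L7,L8,L9,L13,L14,L15,L1,L2,L16,L7,L17,L6,L4,L8,L9,L13,L14,L15],
    [L11,L12,L7,L8,L9,L13,L14,L15,L1,L2,L16,L18,L19,L0,L1,L2,L3,L4,L5,L6],
    [L12,L7,L8,L9,L13,L14,L15,L1,L2,L16,L7,L17,L6,L4,L8,L9,L13,L14,L15,L1],
    [L12,L7,L8,L9,L13,L14,L15,L1,L2,L16,L18,L19,L0,L1,L2,L3,L4,L5,L6,L7],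
    [L13,L14,L15,L1,L2,L16,L7,L17,L6,L4,L8,L9,L13,L14,L15,L1,L2,L16,L18,L19],
    [L13,L14,L15,L1,L2,L16,L18,L19,L0,L1,L2,L3,L4,L5,L6,L7,L8,L9,L10,L11],
    [L13,L14,L15,L1,L2,L16,L18,L19,L0,L1,L2,L3,L4,L5,L6,L7,L20,L9,L10,L21],
    [L14,L15,L1,L2,L16,L7,L17,L6,L4,L8,L9,L13,L14,L15,L1,L2,L16,L18,L19,L0],
    [L14,L15,L1,L2,L16,L18,L19,L0,L1,L2,L3,L4,L5,L6,L7,L8,L9,L10,L11,L12],
    [L14,L15,L1,L2,L16,L18,L19,L0,L1,L2,L3,L4,L5,L6,L7,L20,L9,L10,L21,L0],
    [L15,L1,L2,L16,L7,L17,L6,L4,L8,L9,L13,L14,L15,L1,L2,L16,L18,L19,L0,L1],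
    [L15,L1,L2,L16,L18,L19,L0,L1,L2,L3,L4,L5,L6,L7,L8,L9,L10,L11,L12,L7],
    [L15,L1,L2,L16,L18,L19,L0,L1,L2,L3,L4,L5,L6,L7,L20,L9,L10,L21,L0,L1],
    [L16,L7,L17,L6,L4,L8,L9,L13,L14,L15,L1,L2,L16,L18,L19,L0,L1,L2,L3,L4],
    [L16,L18,L19,L0,L1,L2,L3,L4,L5,L6,L7,L8,L9,L10,L11,L12,L7,L8,L9,L13],
    [L16,L18,L19,L0,L1,L2,L3,L4,L5,L6,L7,L20,L9,L10,L21,L0,L1,L2,L3,L4],
    [L17,L6,L4,L8,L9,L13,L14,L15,L1,L2,L16,L18,L19,L0,L1,L2,L3,L4,L5,L6],
    [L18,L19,L0,L1,L2,L3,L4,L5,L6,L7,L8,L9,L10,L11,L12,L7,L8,L9,L13,L14],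
    [L18,L19,L0,L1,L2,L3,L4,L5,L6,L7,L20,L9,L10,L21,L0,L1,L2,L3,L4,L5],
    [L19,L0,L1,L2,L3,L4,L5,L6,L7,L8,L9,L10,L11,L12,L7,L8,L9,L13,L14,L15],
    [L19,L0,L1,L2,L3,L4,L5,L6,L7,L20,L9,L10,L21,L0,L1,L2,L3,L4,L5,L6],
    [L20,L9,L10,L21,L0,L1,L2,L3,L4,L5,L6,L7,L8,L9,L10,L11,L12,L7,L8,L9],
    [L21,L0,L1,L2,L3,L4,L5,L6,L7,L8,L9,L10,L11,L12,L7,L8,L9,L13,L14,L15]]"

lemma factors20_closed:
  "\<forall>t\<in>set factors20. take 20 (letter_substs t) \<in> set factors20 \<and> take 20 (tl (letter_substs t)) \<in> set factors20"
  by code_simp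

lemma prefix20_in_factors20: "map letter_of (take 20 ((q_star ^^ 5) [0])) \<in> set factors20"
  by code_simp

lemma window_in_factors20: "window i 20 \<in> set factors20"
proof (induction i rule: less_induct)
  case (less i)
  show ?case
  proof (cases "i = 0")
    case True
    then show ?thesis
      using prefix20_in_factors20 by (simp add: window_0_20)
  next
    case False
    then have "window (i div 2) 20 \<in> set factors20"
      by (intro less.IH) simp
    moreover have "i mod 2 = 0 \<or> i mod 2 = 1"
      by auto
    ultimately show ?thesis
      using factors20_closed by (auto simp: window_desubst[of i] drop_Suc)
  qed
qed

lemma factors20_small_squares:
  "\<forall>t\<in>set factors20. \<forall>n\<in>set [1..<10].
     map letter_gamma (take n t) = map letter_gamma (take n (drop n t)) \<longrightarrow>
     map letter_gamma (take n t) \<in> {[0], [1], [1, 0]}"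
  by code_simp

lemma small_square:
  assumes "0 < n" and "n < 10" and square: "\<forall>j<n. gamma (q_omega (i + j)) = gamma (q_omega (i + n + j))"
  shows "map (gamma \<circ> q_omega) [i..<i + n] \<in> {[0], [1], [1, 0]}"
proof -
  have "take n (window i 20) = window i n" and "take n (drop n (window i 20)) = window (i + n) n"
    using take_drop_window[of 0 n 20 i] take_drop_window[of n n 20 i] assms(2) by simp_all
  moreover have "map letter_gamma (window i n) = map letter_gamma (window (i + n) n)"
    using square by (simp add: list_eq_iff_nth_eq gamma_q_omega)
  moreover have "map letter_gamma (window i n) = map (gamma \<circ> q_omega) [i..<i + n]"
    by (simp add: window_def gamma_q_omega)
  moreover have "n \<in> set [1..<10]"
    using assms(1,2) by (simp only: set_upt atLeastLessThan_iff) simp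
  ultimately show ?thesis
    using factors20_small_squares window_in_factors20[of i] by metis
qed

definition even_factors9 :: "letter list list" where
  "even_factors9 =
   [[L0,L1,L2,L3,L4,L5,L6,L7,L8],
    [L0,L1,L2,L3,L4,L5,L6,L7,L20],
    [L2,L3,L4,L5,L6,L7,L8,L9,L10],
    [L2,L3,L4,L5,L6,L7,L20,L9,L10],
    [L2,L16,L7,L17,L6,L4,L8,L9,L13],
    [L2,L16,L18,L19,L0,L1,L2,L3,L4],
    [L4,L5,L6,L7,L8,L9,L10,L11,L12],
    [L4,L5,L6,L7,L20,L9,L10,L21,L0],
    [L6,L4,L8,L9,L13,L14,L15,L1,L2],
    [L6,L7,L8,L9,L10,L11,L12,L7,L8],
    [L6,L7,L20,L9,L10,L21,L0,L1,L2],
    [L7,L17,L6,L4,L8,L9,L13,L14,L15],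
    [L8,L9,L10,L11,L12,L7,L8,L9,L13],
    [L8,L9,L13,L14,L15,L1,L2,L16,L7],
    [L8,L9,L13,L14,L15,L1,L2,L16,L18],
    [L10,L11,L12,L7,L8,L9,L13,L14,L15],
    [L10,L21,L0,L1,L2,L3,L4,L5,L6],
    [L12,L7,L8,L9,L13,L14,L15,L1,L2],
    [L13,L14,L15,L1,L2,L16,L7,L17,L6],
    [L13,L14,L15,L1,L2,L16,L18,L19,L0],
    [L15,L1,L2,L16,L7,L17,L6,L4,L8],
    [L15,L1,L2,L16,L18,L19,L0,L1,L2],
    [L18,L19,L0,L1,L2,L3,L4,L5,L6],
    [L20,L9,L10,L21,L0,L1,L2,L3,L4]]"

definition odd_factors9 :: "letter list list" where
  "odd_factors9 =
   [[L1,L2,L3,L4,L5,L6,L7,L8,L9],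
    [L1,L2,L3,L4,L5,L6,L7,L20,L9],
    [L1,L2,L16,L7,L17,L6,L4,L8,L9],
    [L1,L2,L16,L18,L19,L0,L1,L2,L3],
    [L3,L4,L5,L6,L7,L8,L9,L10,L11],
    [L3,L4,L5,L6,L7,L20,L9,L10,L21],
    [L4,L8,L9,L13,L14,L15,L1,L2,L16],
    [L5,L6,L7,L8,L9,L10,L11,L12,L7],
    [L5,L6,L7,L20,L9,L10,L21,L0,L1],
    [L7,L8,L9,L10,L11,L12,L7,L8,L9],
    [L7,L8,L9,L13,L14,L15,L1,L2,L16],
    [L7,L20,L9,L10,L21,L0,L1,L2,L3],
    [L9,L10,L11,L12,L7,L8,L9,L13,L14],
    [L9,L10,L21,L0,L1,L2,L3,L4,L5],
    [L9,L13,L14,L15,L1,L2,L16,L7,L17],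
    [L9,L13,L14,L15,L1,L2,L16,L18,L19],
    [L11,L12,L7,L8,L9,L13,L14,L15,L1],
    [L14,L15,L1,L2,L16,L7,L17,L6,L4],
    [L14,L15,L1,L2,L16,L18,L19,L0,L1],
    [L16,L7,L17,L6,L4,L8,L9,L13,L14],
    [L16,L18,L19,L0,L1,L2,L3,L4,L5],
    [L17,L6,L4,L8,L9,L13,L14,L15,L1],
    [L19,L0,L1,L2,L3,L4,L5,L6,L7],
    [L21,L0,L1,L2,L3,L4,L5,L6,L7]]"

lemma factors20_factors9:
  "\<forall>t\<in>set factors20. take 9 (letter_substs t) \<in> set even_factors9 \<and> take 9 (tl (letter_substs t)) \<in> set odd_factors9"
  by code_simp

lemma window9_parity: "window p 9 \<in> set (if even p then even_factors9 else odd_factors9)"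
proof -
  have "window p 9 = take 9 (drop (p mod 2) (letter_substs (window (p div 2) 20)))"
    using take_drop_window[of 0 9 20 p] by (simp add: window_desubst[of p 20])
  then show ?thesis
    using factors20_factors9 window_in_factors20[of "p div 2"]
    by (auto simp: drop_Suc odd_iff_mod_2_eq_one)
qed

section \<open>Square patterns\<close>

definition position :: "'a list \<Rightarrow> 'a \<Rightarrow> nat" where
  "position ys y = length (takeWhile (\<lambda>z. z \<noteq> y) ys)"

lemma nth_position: "y \<in> set ys \<Longrightarrow> position ys y < length ys \<and> ys ! position ys y = y"
  by (induction ys) (auto simp: position_def)

(* A coloring is the list of the colors of L0, ..., L21. The canonical coloring of f colors each
   letter by the first letter with the same value of f, so colorings inducing the same partition
   of the alphabet coincide; this keeps the set of patterns finite. *)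
definition canon :: "(letter \<Rightarrow> 'a) \<Rightarrow> letter list" where
  "canon f = (let ys = map f letters in map (\<lambda>y. letters ! position ys y) ys)"

definition color :: "letter list \<Rightarrow> letter \<Rightarrow> letter" where
  "color c u = c ! letter_index u"

lemma color_canon_eq_iff: "color (canon f) u = color (canon f) v \<longleftrightarrow> f u = f v"
proof -
  define ys where "ys = map f letters"
  have ys: "ys ! letter_index w = f w" for w
    using letter_of_index[of w] letter_index_less[of w]
    by (simp add: ys_def letter_of_def length_letters)
  have pos: "position ys (f w) < 22 \<and> ys ! position ys (f w) = f w" for w
    using nth_position[of "f w" ys] letter_in_letters[of w] by (simp add: ys_def length_letters)
  have "length ys = 22"
    by (simp add: ys_def length_letters)
  then have "color (canon f) w = letters ! position ys (f w)" for w
    using letter_index_less[of w] ys by (simp add: color_def canon_def Let_def ys_def [symmetric])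
  then show ?thesis
    using pos[of u] pos[of v] by (metis nth_letters_eq_iff)
qed

definition first_coloring :: "letter list \<Rightarrow> letter list" where
  "first_coloring c = canon (\<lambda>u. color c (letter_subst u ! 0))"

definition second_coloring :: "letter list \<Rightarrow> letter list" where
  "second_coloring c = canon (\<lambda>u. color c (letter_subst u ! 1))"

definition pair_coloring :: "letter list \<Rightarrow> letter list \<Rightarrow> letter list" where
  "pair_coloring c c' = canon (\<lambda>u. (color c (letter_subst u ! 0), color c' (letter_subst u ! 1)))"

definition agree :: "letter list \<Rightarrow> (nat \<Rightarrow> letter) \<Rightarrow> nat \<Rightarrow> nat \<Rightarrow> bool" where
  "agree c w n i \<longleftrightarrow> color c (w i) = color c (w (i + n))"

(* The flag s of a pattern shortens its block by one letter. It is set when an occurrence is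
   desubstituted from an odd position, since the block then ends inside the image of a letter. *)
datatype pattern = Pattern "letter list" "letter list" "letter list" bool

fun body :: "pattern \<Rightarrow> letter list" where
  "body (Pattern a b c s) = b"

fun occurs :: "pattern \<Rightarrow> (nat \<Rightarrow> letter) \<Rightarrow> nat \<Rightarrow> nat \<Rightarrow> bool" where
  "occurs (Pattern a b c s) w n x \<longleftrightarrow>
     (x = 0 \<or> agree a w n (x - 1)) \<and>
     (\<forall>j < n - of_bool s. agree b w n (x + j)) \<and>
     agree c w n (x + (n - of_bool s))"

fun desubst :: "pattern \<Rightarrow> pattern list" where
  "desubst (Pattern a b c False) =
     [Pattern (second_coloring a) (pair_coloring b b) (first_coloring c) False,
      Pattern (pair_coloring a b) (pair_coloring b b) (pair_coloring b c) True]"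
| "desubst (Pattern a b c True) =
     [Pattern (second_coloring a) (pair_coloring b b) (pair_coloring b c) True,
      Pattern (pair_coloring a b) (pair_coloring b b) (first_coloring c) True]"

definition gamma_square_pattern :: pattern where
  "gamma_square_pattern = Pattern (canon (\<lambda>_. ())) (canon letter_gamma) (canon (\<lambda>_. ())) False"

lemma agree_first_coloring: "agree (first_coloring c) qword m z \<longleftrightarrow> agree c qword (2 * m) (2 * z)"
proof -
  have "2 * z + 2 * m = 2 * (z + m)"
    by simp
  then show ?thesis
    by (simp only: agree_def first_coloring_def color_canon_eq_iff qword_double)
qed

lemma agree_second_coloring:
  "agree (second_coloring c) qword m z \<longleftrightarrow> agree c qword (2 * m) (Suc (2 * z))"
proof -
  have "Suc (2 * z) + 2 * m = Suc (2 * (z + m))"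
    by simp
  then show ?thesis
    by (simp only: agree_def second_coloring_def color_canon_eq_iff qword_double_Suc)
qed

lemma agree_pair_coloring:
  "agree (pair_coloring c c') qword m z \<longleftrightarrow>
    agree c qword (2 * m) (2 * z) \<and> agree c' qword (2 * m) (Suc (2 * z))"
proof -
  have "2 * z + 2 * m = 2 * (z + m)" and "Suc (2 * z) + 2 * m = Suc (2 * (z + m))"
    by simp_all
  then show ?thesis
    by (simp only: agree_def pair_coloring_def color_canon_eq_iff qword_double qword_double_Suc
        prod.inject)
qed

lemma agree_pair_coloring_block:
  assumes "\<forall>j < 2 * k. agree b qword (2 * m) (2 * z + j)" and "j < k"
  shows "agree (pair_coloring b b) qword m (z + j)"
  using assms(1)[rule_format, of "2 * j"] assms(1)[rule_format, of "Suc (2 * j)"] assms(2)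
  by (simp add: agree_pair_coloring algebra_simps)

lemma occurs_desubst_even:
  assumes occ: "occurs P qword (2 * m) (2 * y)" and "0 < m"
  shows "\<exists>P'\<in>set (desubst P). occurs P' qword m y"
proof -
  obtain a b c s where P: "P = Pattern a b c s"
    by (cases P)
  define d :: nat where "d = of_bool s"
  from occ have left: "y = 0 \<or> agree a qword (2 * m) (2 * y - 1)"
    and body: "\<forall>j < 2 * m - d. agree b qword (2 * m) (2 * y + j)"
    and right: "agree c qword (2 * m) (2 * y + (2 * m - d))"
    by (simp_all add: P d_def)
  have left': "y = 0 \<or> agree (second_coloring a) qword m (y - 1)"
    using left by (cases y) (simp_all add: agree_second_coloring)
  have body': "\<forall>j < m - d. agree (pair_coloring b b) qword m (y + j)"
    using body by (auto intro: agree_pair_coloring_block[of "m - d"] simp: d_def)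
  show ?thesis
  proof (cases s)
    case False
    then have "agree (first_coloring c) qword m (y + m)"
      using right by (simp add: agree_first_coloring d_def algebra_simps)
    then show ?thesis
      using left' body' False by (simp add: P d_def)
  next
    case True
    obtain k where m: "m = Suc k"
      using \<open>0 < m\<close> gr0_implies_Suc by blast
    have "2 * (y + k) = 2 * y + 2 * k" and "Suc (2 * (y + k)) = 2 * y + (2 * m - d)"
      using True by (simp_all add: m d_def)
    then have "agree b qword (2 * m) (2 * (y + k))" and "agree c qword (2 * m) (Suc (2 * (y + k)))"
      using body[rule_format, of "2 * k"] right True by (simp_all add: m d_def)
    then have "agree (pair_coloring b c) qword m (y + k)"
      by (simp add: agree_pair_coloring m)
    then show ?thesis
      using left' body' True by (simp add: P m d_def)
  qed
qed

lemma occurs_desubst_odd: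
  assumes occ: "occurs P qword (2 * m) (Suc (2 * y))" and "0 < m"
  shows "\<exists>P'\<in>set (desubst P). occurs P' qword m (Suc y)"
proof -
  obtain a b c s where P: "P = Pattern a b c s"
    by (cases P)
  obtain k where m: "m = Suc k"
    using \<open>0 < m\<close> gr0_implies_Suc by blast
  define d :: nat where "d = of_bool s"
  from occ have left: "agree a qword (2 * m) (2 * y)"
    and body: "\<forall>j < 2 * m - d. agree b qword (2 * m) (Suc (2 * y) + j)"
    and right: "agree c qword (2 * m) (Suc (2 * y) + (2 * m - d))"
    by (simp_all add: P d_def)
  have "agree b qword (2 * m) (Suc (2 * y))"
    using body[rule_format, of 0] by (simp add: m d_def)
  then have left': "agree (pair_coloring a b) qword m y"
    using left by (simp add: agree_pair_coloring)
  have "\<forall>j < 2 * k. agree b qword (2 * m) (2 * Suc y + j)"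
  proof (intro allI impI)
    fix j
    assume "j < 2 * k"
    then show "agree b qword (2 * m) (2 * Suc y + j)"
      using body[rule_format, of "Suc j"] by (cases s) (simp_all add: m d_def)
  qed
  then have body': "\<forall>j < k. agree (pair_coloring b b) qword m (Suc y + j)"
    by (blast intro: agree_pair_coloring_block)
  show ?thesis
  proof (cases s)
    case False
    have "agree b qword (2 * m) (2 * (y + m))" and "agree c qword (2 * m) (Suc (2 * (y + m)))"
      using body[rule_format, of "Suc (2 * k)"] right False by (simp_all add: m d_def)
    then have "agree (pair_coloring b c) qword m (y + m)"
      by (simp add: agree_pair_coloring)
    then show ?thesis
      using left' body' False by (simp add: P m)
  next
    case True
    have "agree (first_coloring c) qword m (y + m)"
      using right True by (simp add: agree_first_coloring m d_def)
    then show ?thesis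
      using left' body' True by (simp add: P m)
  qed
qed

definition square_patterns :: "pattern list" where
  "square_patterns =
   [Pattern [L0,L0,L0,L0,L0,L0,L0,L0,L0,L0,L0,L0,L0,L0,L0,L0,L0,L0,L0,L0,L0,L0]
      [L0,L0,L2,L0,L2,L2,L0,L0,L2,L2,L2,L0,L0,L0,L0,L2,L2,L0,L2,L0,L0,L2]
      [L0,L0,L0,L0,L0,L0,L0,L0,L0,L0,L0,L0,L0,L0,L0,L0,L0,L0,L0,L0,L0,L0] False,
    Pattern [L0,L0,L0,L0,L0,L0,L0,L0,L0,L0,L0,L0,L0,L0,L0,L0,L0,L0,L0,L0,L0,L0]
      [L0,L1,L2,L0,L2,L1,L0,L2,L0,L1,L2,L0,L12,L2,L1,L0,L0,L1,L12,L2,L0,L1]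
      [L0,L0,L0,L0,L0,L0,L0,L0,L0,L0,L0,L0,L0,L0,L0,L0,L0,L0,L0,L0,L0,L0] False,
    Pattern [L0,L0,L2,L0,L2,L0,L0,L2,L0,L0,L2,L0,L2,L2,L0,L0,L0,L0,L2,L2,L0,L0]
      [L0,L1,L2,L0,L2,L1,L0,L2,L0,L1,L2,L0,L12,L2,L1,L0,L0,L1,L12,L2,L0,L1]
      [L0,L1,L1,L0,L1,L1,L0,L1,L0,L1,L1,L0,L0,L1,L1,L0,L0,L1,L0,L1,L0,L1] True,
    Pattern [L0,L0,L0,L0,L0,L0,L0,L0,L0,L0,L0,L0,L0,L0,L0,L0,L0,L0,L0,L0,L0,L0]
      [L0,L1,L2,L3,L0,L1,L6,L0,L2,L0,L1,L2,L3,L1,L6,L0,L3,L1,L0,L2,L2,L6]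
      [L0,L0,L0,L0,L0,L0,L0,L0,L0,L0,L0,L0,L0,L0,L0,L0,L0,L0,L0,L0,L0,L0] False,
    Pattern [L0,L1,L0,L3,L0,L1,L3,L0,L0,L0,L1,L0,L3,L1,L3,L0,L3,L1,L0,L0,L0,L3]
      [L0,L1,L2,L3,L0,L1,L6,L0,L2,L0,L1,L2,L3,L1,L6,L0,L3,L1,L0,L2,L2,L6]
      [L0,L1,L1,L0,L0,L1,L6,L0,L1,L0,L1,L1,L0,L1,L6,L0,L0,L1,L0,L1,L1,L6] True,
    Pattern [L0,L0,L0,L3,L0,L0,L3,L0,L0,L0,L0,L0,L3,L0,L3,L0,L3,L0,L0,L0,L0,L3]
      [L0,L1,L2,L3,L0,L1,L6,L0,L2,L0,L1,L2,L3,L1,L6,L0,L3,L1,L0,L2,L2,L6]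
      [L0,L1,L2,L0,L0,L1,L6,L0,L2,L0,L1,L2,L0,L1,L6,L0,L0,L1,L0,L2,L2,L6] True,
    Pattern [L0,L1,L2,L3,L0,L1,L6,L0,L2,L0,L1,L2,L3,L1,L6,L0,L3,L1,L0,L2,L2,L6]
      [L0,L1,L2,L3,L0,L1,L6,L0,L2,L0,L1,L2,L3,L1,L6,L0,L3,L1,L0,L2,L2,L6]
      [L0,L1,L1,L0,L0,L1,L0,L0,L1,L0,L1,L1,L0,L1,L0,L0,L0,L1,L0,L1,L1,L0] True,
    Pattern [L0,L0,L0,L0,L0,L0,L0,L0,L0,L0,L0,L0,L0,L0,L0,L0,L0,L0,L0,L0,L0,L0]
      [L0,L1,L0,L3,L4,L5,L6,L4,L8,L0,L1,L0,L3,L1,L14,L0,L3,L5,L4,L8,L8,L14]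
      [L0,L0,L0,L0,L0,L0,L0,L0,L0,L0,L0,L0,L0,L0,L0,L0,L0,L0,L0,L0,L0,L0] False,
    Pattern [L0,L1,L0,L3,L3,L5,L3,L3,L8,L0,L1,L0,L3,L1,L5,L0,L3,L5,L3,L8,L8,L5]
      [L0,L1,L0,L3,L4,L5,L6,L4,L8,L0,L1,L0,L3,L1,L14,L0,L3,L5,L4,L8,L8,L14]
      [L0,L1,L0,L3,L1,L5,L6,L1,L5,L0,L1,L0,L3,L1,L0,L0,L3,L5,L1,L5,L5,L0] True,
    Pattern [L0,L1,L0,L3,L3,L3,L3,L3,L1,L0,L1,L0,L3,L1,L3,L0,L3,L3,L3,L1,L1,L3]
      [L0,L1,L0,L3,L4,L5,L6,L4,L8,L0,L1,L0,L3,L1,L14,L0,L3,L5,L4,L8,L8,L14]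
      [L0,L1,L0,L3,L1,L5,L6,L1,L8,L0,L1,L0,L3,L1,L0,L0,L3,L5,L1,L8,L8,L0] True,
    Pattern [L0,L1,L0,L3,L4,L5,L3,L4,L8,L0,L1,L0,L3,L1,L14,L0,L3,L5,L4,L8,L8,L14]
      [L0,L1,L0,L3,L4,L5,L6,L4,L8,L0,L1,L0,L3,L1,L14,L0,L3,L5,L4,L8,L8,L14]
      [L0,L1,L0,L3,L1,L1,L0,L1,L1,L0,L1,L0,L3,L1,L0,L0,L3,L1,L1,L1,L1,L0] True,
    Pattern [L0,L1,L0,L0,L0,L0,L0,L0,L1,L0,L1,L0,L0,L1,L0,L0,L0,L0,L0,L1,L1,L0]
      [L0,L1,L0,L3,L4,L5,L6,L4,L8,L0,L1,L0,L3,L1,L14,L0,L3,L5,L4,L8,L8,L14]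
      [L0,L1,L0,L3,L1,L5,L6,L1,L8,L0,L1,L0,L3,L1,L14,L0,L3,L5,L1,L8,L8,L14] True,
    Pattern [L0,L1,L0,L3,L4,L5,L3,L4,L8,L0,L1,L0,L3,L1,L5,L0,L3,L5,L4,L8,L8,L5]
      [L0,L1,L0,L3,L4,L5,L6,L4,L8,L0,L1,L0,L3,L1,L14,L0,L3,L5,L4,L8,L8,L14]
      [L0,L1,L0,L3,L1,L5,L0,L1,L5,L0,L1,L0,L3,L1,L0,L0,L3,L5,L1,L5,L5,L0] True,
    Pattern [L0,L1,L0,L3,L3,L5,L3,L3,L8,L0,L1,L0,L3,L1,L5,L0,L3,L5,L3,L8,L8,L5]
      [L0,L1,L0,L3,L4,L5,L6,L4,L8,L0,L1,L0,L3,L1,L14,L0,L3,L5,L4,L8,L8,L14]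
      [L0,L1,L0,L3,L1,L5,L6,L1,L8,L0,L1,L0,L3,L1,L0,L0,L3,L5,L1,L8,L8,L0] True,
    Pattern [L0,L1,L0,L3,L4,L5,L6,L4,L8,L0,L1,L0,L3,L1,L14,L0,L3,L5,L4,L8,L8,L14]
      [L0,L1,L0,L3,L4,L5,L6,L4,L8,L0,L1,L0,L3,L1,L14,L0,L3,L5,L4,L8,L8,L14]
      [L0,L1,L0,L0,L1,L1,L0,L1,L1,L0,L1,L0,L0,L1,L0,L0,L0,L1,L1,L1,L1,L0] True,
    Pattern [L0,L0,L0,L0,L0,L0,L0,L0,L0,L0,L0,L0,L0,L0,L0,L0,L0,L0,L0,L0,L0,L0]
      [L0,L1,L2,L3,L4,L5,L6,L4,L8,L0,L1,L2,L3,L1,L14,L0,L3,L5,L4,L8,L8,L14]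
      [L0,L0,L0,L0,L0,L0,L0,L0,L0,L0,L0,L0,L0,L0,L0,L0,L0,L0,L0,L0,L0,L0] False,
    Pattern [L0,L1,L2,L3,L4,L4,L3,L4,L8,L0,L1,L2,L3,L1,L14,L0,L3,L4,L4,L8,L8,L14]
      [L0,L1,L2,L3,L4,L5,L6,L4,L8,L0,L1,L2,L3,L1,L14,L0,L3,L5,L4,L8,L8,L14]
      [L0,L0,L2,L3,L4,L5,L6,L4,L5,L0,L0,L2,L3,L0,L2,L0,L3,L5,L4,L5,L5,L2] True,
    Pattern [L0,L1,L2,L1,L4,L4,L1,L4,L2,L0,L1,L2,L1,L1,L14,L0,L1,L4,L4,L2,L2,L14]
      [L0,L1,L2,L3,L4,L5,L6,L4,L8,L0,L1,L2,L3,L1,L14,L0,L3,L5,L4,L8,L8,L14]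
      [L0,L1,L2,L3,L4,L5,L6,L4,L5,L0,L1,L2,L3,L1,L2,L0,L3,L5,L4,L5,L5,L2] True,
    Pattern [L0,L1,L2,L3,L4,L5,L3,L4,L8,L0,L1,L2,L3,L1,L14,L0,L3,L5,L4,L8,L8,L14]
      [L0,L1,L2,L3,L4,L5,L6,L4,L8,L0,L1,L2,L3,L1,L14,L0,L3,L5,L4,L8,L8,L14]
      [L0,L0,L2,L3,L4,L2,L6,L4,L2,L0,L0,L2,L3,L0,L2,L0,L3,L2,L4,L2,L2,L2] True,
    Pattern [L0,L1,L1,L1,L4,L4,L1,L4,L1,L0,L1,L1,L1,L1,L0,L0,L1,L4,L4,L1,L1,L0]
      [L0,L1,L2,L3,L4,L5,L6,L4,L8,L0,L1,L2,L3,L1,L14,L0,L3,L5,L4,L8,L8,L14]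
      [L0,L1,L2,L3,L4,L5,L6,L4,L5,L0,L1,L2,L3,L1,L14,L0,L3,L5,L4,L5,L5,L14] True,
    Pattern [L0,L1,L2,L3,L4,L4,L3,L4,L8,L0,L1,L2,L3,L1,L14,L0,L3,L4,L4,L8,L8,L14]
      [L0,L1,L2,L3,L4,L5,L6,L4,L8,L0,L1,L2,L3,L1,L14,L0,L3,L5,L4,L8,L8,L14]
      [L0,L0,L2,L3,L4,L2,L6,L4,L2,L0,L0,L2,L3,L0,L2,L0,L3,L2,L4,L2,L2,L2] True,
    Pattern [L0,L1,L2,L3,L4,L4,L3,L4,L8,L0,L1,L2,L3,L1,L14,L0,L3,L4,L4,L8,L8,L14]
      [L0,L1,L2,L3,L4,L5,L6,L4,L8,L0,L1,L2,L3,L1,L14,L0,L3,L5,L4,L8,L8,L14]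
      [L0,L1,L2,L3,L4,L5,L6,L4,L5,L0,L1,L2,L3,L1,L2,L0,L3,L5,L4,L5,L5,L2] True,
    Pattern [L0,L1,L2,L3,L4,L5,L3,L4,L8,L0,L1,L2,L3,L1,L14,L0,L3,L5,L4,L8,L8,L14]
      [L0,L1,L2,L3,L4,L5,L6,L4,L8,L0,L1,L2,L3,L1,L14,L0,L3,L5,L4,L8,L8,L14]
      [L0,L0,L2,L0,L2,L2,L6,L2,L2,L0,L0,L2,L0,L0,L2,L0,L0,L2,L2,L2,L2,L2] True,
    Pattern [L0,L1,L1,L1,L1,L1,L1,L1,L1,L0,L1,L1,L1,L1,L0,L0,L1,L1,L1,L1,L1,L0]
      [L0,L1,L2,L3,L4,L5,L6,L4,L8,L0,L1,L2,L3,L1,L14,L0,L3,L5,L4,L8,L8,L14]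
      [L0,L1,L2,L3,L4,L5,L6,L4,L8,L0,L1,L2,L3,L1,L14,L0,L3,L5,L4,L8,L8,L14] True,
    Pattern [L0,L1,L2,L3,L4,L4,L3,L4,L2,L0,L1,L2,L3,L1,L14,L0,L3,L4,L4,L2,L2,L14]
      [L0,L1,L2,L3,L4,L5,L6,L4,L8,L0,L1,L2,L3,L1,L14,L0,L3,L5,L4,L8,L8,L14]
      [L0,L1,L2,L3,L4,L5,L6,L4,L5,L0,L1,L2,L3,L1,L2,L0,L3,L5,L4,L5,L5,L2] True,
    Pattern [L0,L1,L2,L3,L4,L5,L3,L4,L8,L0,L1,L2,L3,L1,L14,L0,L3,L5,L4,L8,L8,L14]
      [L0,L1,L2,L3,L4,L5,L6,L4,L8,L0,L1,L2,L3,L1,L14,L0,L3,L5,L4,L8,L8,L14]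
      [L0,L0,L2,L0,L4,L2,L6,L4,L2,L0,L0,L2,L0,L0,L2,L0,L0,L2,L4,L2,L2,L2] True,
    Pattern [L0,L1,L2,L1,L4,L4,L1,L4,L2,L0,L1,L2,L1,L1,L14,L0,L1,L4,L4,L2,L2,L14]
      [L0,L1,L2,L3,L4,L5,L6,L4,L8,L0,L1,L2,L3,L1,L14,L0,L3,L5,L4,L8,L8,L14]
      [L0,L1,L2,L3,L4,L5,L6,L4,L5,L0,L1,L2,L3,L1,L14,L0,L3,L5,L4,L5,L5,L14] True,
    Pattern [L0,L1,L2,L3,L4,L5,L6,L4,L8,L0,L1,L2,L3,L1,L14,L0,L3,L5,L4,L8,L8,L14]
      [L0,L1,L2,L3,L4,L5,L6,L4,L8,L0,L1,L2,L3,L1,L14,L0,L3,L5,L4,L8,L8,L14]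
      [L0,L0,L2,L0,L2,L2,L0,L2,L2,L0,L0,L2,L0,L0,L2,L0,L0,L2,L2,L2,L2,L2] True,
    Pattern [L0,L1,L2,L3,L4,L5,L3,L4,L8,L0,L1,L2,L3,L1,L14,L0,L3,L5,L4,L8,L8,L14]
      [L0,L1,L2,L3,L4,L5,L6,L4,L8,L0,L1,L2,L3,L1,L14,L0,L3,L5,L4,L8,L8,L14]
      [L0,L1,L2,L3,L4,L5,L6,L4,L5,L0,L1,L2,L3,L1,L2,L0,L3,L5,L4,L5,L5,L2] True,
    Pattern [L0,L1,L2,L2,L4,L5,L2,L4,L8,L0,L1,L2,L2,L1,L14,L0,L2,L5,L4,L8,L8,L14]
      [L0,L1,L2,L3,L4,L5,L6,L4,L8,L0,L1,L2,L3,L1,L14,L0,L3,L5,L4,L8,L8,L14]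
      [L0,L1,L2,L3,L4,L5,L6,L4,L5,L0,L1,L2,L3,L1,L2,L0,L3,L5,L4,L5,L5,L2] True,
    Pattern [L0,L1,L2,L3,L4,L5,L3,L4,L8,L0,L1,L2,L3,L1,L14,L0,L3,L5,L4,L8,L8,L14]
      [L0,L1,L2,L3,L4,L5,L6,L4,L8,L0,L1,L2,L3,L1,L14,L0,L3,L5,L4,L8,L8,L14]
      [L0,L1,L2,L3,L4,L0,L6,L4,L0,L0,L1,L2,L3,L1,L2,L0,L3,L0,L4,L0,L0,L2] True,
    Pattern [L0,L0,L2,L2,L4,L5,L2,L4,L8,L0,L0,L2,L2,L0,L5,L0,L2,L5,L4,L8,L8,L5]
      [L0,L1,L2,L3,L4,L5,L6,L4,L8,L0,L1,L2,L3,L1,L14,L0,L3,L5,L4,L8,L8,L14]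
      [L0,L1,L2,L3,L4,L5,L6,L4,L5,L0,L1,L2,L3,L1,L2,L0,L3,L5,L4,L5,L5,L2] True,
    Pattern [L0,L1,L2,L3,L4,L5,L3,L4,L8,L0,L1,L2,L3,L1,L14,L0,L3,L5,L4,L8,L8,L14]
      [L0,L1,L2,L3,L4,L5,L6,L4,L8,L0,L1,L2,L3,L1,L14,L0,L3,L5,L4,L8,L8,L14]
      [L0,L1,L2,L3,L1,L0,L6,L1,L0,L0,L1,L2,L3,L1,L2,L0,L3,L0,L1,L0,L0,L2] True,
    Pattern [L0,L0,L2,L2,L4,L0,L2,L4,L4,L0,L0,L2,L2,L0,L0,L0,L2,L0,L4,L4,L4,L0]
      [L0,L1,L2,L3,L4,L5,L6,L4,L8,L0,L1,L2,L3,L1,L14,L0,L3,L5,L4,L8,L8,L14]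
      [L0,L1,L2,L3,L4,L5,L6,L4,L8,L0,L1,L2,L3,L1,L2,L0,L3,L5,L4,L8,L8,L2] True,
    Pattern [L0,L1,L2,L3,L4,L5,L3,L4,L8,L0,L1,L2,L3,L1,L14,L0,L3,L5,L4,L8,L8,L14]
      [L0,L1,L2,L3,L4,L5,L6,L4,L8,L0,L1,L2,L3,L1,L14,L0,L3,L5,L4,L8,L8,L14]
      [L0,L1,L1,L3,L1,L0,L0,L1,L0,L0,L1,L1,L3,L1,L1,L0,L3,L0,L1,L0,L0,L1] True,
    Pattern [L0,L0,L0,L0,L4,L0,L0,L4,L4,L0,L0,L0,L0,L0,L0,L0,L0,L0,L4,L4,L4,L0]
      [L0,L1,L2,L3,L4,L5,L6,L4,L8,L0,L1,L2,L3,L1,L14,L0,L3,L5,L4,L8,L8,L14]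
      [L0,L1,L2,L3,L4,L5,L6,L4,L8,L0,L1,L2,L3,L1,L14,L0,L3,L5,L4,L8,L8,L14] True,
    Pattern [L0,L1,L2,L2,L4,L5,L2,L4,L8,L0,L1,L2,L2,L1,L5,L0,L2,L5,L4,L8,L8,L5]
      [L0,L1,L2,L3,L4,L5,L6,L4,L8,L0,L1,L2,L3,L1,L14,L0,L3,L5,L4,L8,L8,L14]
      [L0,L1,L2,L3,L4,L5,L6,L4,L5,L0,L1,L2,L3,L1,L2,L0,L3,L5,L4,L5,L5,L2] True,
    Pattern [L0,L1,L2,L3,L4,L5,L3,L4,L8,L0,L1,L2,L3,L1,L14,L0,L3,L5,L4,L8,L8,L14]
      [L0,L1,L2,L3,L4,L5,L6,L4,L8,L0,L1,L2,L3,L1,L14,L0,L3,L5,L4,L8,L8,L14]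
      [L0,L1,L2,L3,L1,L0,L0,L1,L0,L0,L1,L2,L3,L1,L2,L0,L3,L0,L1,L0,L0,L2] True,
    Pattern [L0,L0,L2,L2,L4,L5,L2,L4,L8,L0,L0,L2,L2,L0,L5,L0,L2,L5,L4,L8,L8,L5]
      [L0,L1,L2,L3,L4,L5,L6,L4,L8,L0,L1,L2,L3,L1,L14,L0,L3,L5,L4,L8,L8,L14]
      [L0,L1,L2,L3,L4,L5,L6,L4,L8,L0,L1,L2,L3,L1,L2,L0,L3,L5,L4,L8,L8,L2] True,
    Pattern [L0,L1,L2,L3,L4,L5,L6,L4,L8,L0,L1,L2,L3,L1,L14,L0,L3,L5,L4,L8,L8,L14]
      [L0,L1,L2,L3,L4,L5,L6,L4,L8,L0,L1,L2,L3,L1,L14,L0,L3,L5,L4,L8,L8,L14]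
      [L0,L1,L1,L0,L1,L0,L0,L1,L0,L0,L1,L1,L0,L1,L1,L0,L0,L0,L1,L0,L0,L1] True,
    Pattern [L0,L1,L2,L3,L4,L1,L3,L4,L8,L0,L1,L2,L3,L1,L14,L0,L3,L1,L4,L8,L8,L14]
      [L0,L1,L2,L3,L4,L5,L6,L4,L8,L0,L1,L2,L3,L1,L14,L0,L3,L5,L4,L8,L8,L14]
      [L0,L1,L2,L3,L4,L5,L6,L4,L5,L0,L1,L2,L3,L1,L2,L0,L3,L5,L4,L5,L5,L2] True,
    Pattern [L0,L1,L2,L3,L4,L5,L3,L4,L8,L0,L1,L2,L3,L1,L14,L0,L3,L5,L4,L8,L8,L14]
      [L0,L1,L2,L3,L4,L5,L6,L4,L8,L0,L1,L2,L3,L1,L14,L0,L3,L5,L4,L8,L8,L14]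
      [L0,L1,L2,L3,L0,L5,L6,L0,L5,L0,L1,L2,L3,L1,L2,L0,L3,L5,L0,L5,L5,L2] True,
    Pattern [L0,L1,L2,L3,L0,L1,L3,L0,L2,L0,L1,L2,L3,L1,L14,L0,L3,L1,L0,L2,L2,L14]
      [L0,L1,L2,L3,L4,L5,L6,L4,L8,L0,L1,L2,L3,L1,L14,L0,L3,L5,L4,L8,L8,L14]
      [L0,L1,L2,L3,L4,L5,L6,L4,L5,L0,L1,L2,L3,L1,L2,L0,L3,L5,L4,L5,L5,L2] True,
    Pattern [L0,L1,L2,L3,L4,L5,L3,L4,L8,L0,L1,L2,L3,L1,L14,L0,L3,L5,L4,L8,L8,L14]
      [L0,L1,L2,L3,L4,L5,L6,L4,L8,L0,L1,L2,L3,L1,L14,L0,L3,L5,L4,L8,L8,L14]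
      [L0,L1,L2,L3,L0,L2,L6,L0,L2,L0,L1,L2,L3,L1,L2,L0,L3,L2,L0,L2,L2,L2] True,
    Pattern [L0,L1,L0,L3,L0,L1,L3,L0,L0,L0,L1,L0,L3,L1,L3,L0,L3,L1,L0,L0,L0,L3]
      [L0,L1,L2,L3,L4,L5,L6,L4,L8,L0,L1,L2,L3,L1,L14,L0,L3,L5,L4,L8,L8,L14]
      [L0,L1,L2,L3,L4,L5,L6,L4,L5,L0,L1,L2,L3,L1,L14,L0,L3,L5,L4,L5,L5,L14] True,
    Pattern [L0,L1,L2,L3,L4,L5,L3,L4,L8,L0,L1,L2,L3,L1,L14,L0,L3,L5,L4,L8,L8,L14]
      [L0,L1,L2,L3,L4,L5,L6,L4,L8,L0,L1,L2,L3,L1,L14,L0,L3,L5,L4,L8,L8,L14]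
      [L0,L1,L1,L0,L0,L1,L6,L0,L1,L0,L1,L1,L0,L1,L1,L0,L0,L1,L0,L1,L1,L1] True,
    Pattern [L0,L0,L0,L3,L0,L0,L3,L0,L0,L0,L0,L0,L3,L0,L3,L0,L3,L0,L0,L0,L0,L3]
      [L0,L1,L2,L3,L4,L5,L6,L4,L8,L0,L1,L2,L3,L1,L14,L0,L3,L5,L4,L8,L8,L14]
      [L0,L1,L2,L3,L4,L5,L6,L4,L8,L0,L1,L2,L3,L1,L14,L0,L3,L5,L4,L8,L8,L14] True,
    Pattern [L0,L1,L2,L3,L4,L1,L3,L4,L2,L0,L1,L2,L3,L1,L14,L0,L3,L1,L4,L2,L2,L14]
      [L0,L1,L2,L3,L4,L5,L6,L4,L8,L0,L1,L2,L3,L1,L14,L0,L3,L5,L4,L8,L8,L14]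
      [L0,L1,L2,L3,L4,L5,L6,L4,L5,L0,L1,L2,L3,L1,L2,L0,L3,L5,L4,L5,L5,L2] True,
    Pattern [L0,L1,L2,L3,L4,L5,L3,L4,L8,L0,L1,L2,L3,L1,L14,L0,L3,L5,L4,L8,L8,L14]
      [L0,L1,L2,L3,L4,L5,L6,L4,L8,L0,L1,L2,L3,L1,L14,L0,L3,L5,L4,L8,L8,L14]
      [L0,L1,L2,L0,L0,L2,L6,L0,L2,L0,L1,L2,L0,L1,L2,L0,L0,L2,L0,L2,L2,L2] True,
    Pattern [L0,L1,L2,L3,L0,L1,L3,L0,L2,L0,L1,L2,L3,L1,L14,L0,L3,L1,L0,L2,L2,L14]
      [L0,L1,L2,L3,L4,L5,L6,L4,L8,L0,L1,L2,L3,L1,L14,L0,L3,L5,L4,L8,L8,L14]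
      [L0,L1,L2,L3,L4,L5,L6,L4,L5,L0,L1,L2,L3,L1,L14,L0,L3,L5,L4,L5,L5,L14] True,
    Pattern [L0,L1,L2,L3,L4,L5,L6,L4,L8,L0,L1,L2,L3,L1,L14,L0,L3,L5,L4,L8,L8,L14]
      [L0,L1,L2,L3,L4,L5,L6,L4,L8,L0,L1,L2,L3,L1,L14,L0,L3,L5,L4,L8,L8,L14]
      [L0,L1,L1,L0,L0,L1,L0,L0,L1,L0,L1,L1,L0,L1,L1,L0,L0,L1,L0,L1,L1,L1] True,
    Pattern [L0,L1,L0,L3,L4,L5,L3,L4,L8,L0,L1,L0,L3,L1,L14,L0,L3,L5,L4,L8,L8,L14]
      [L0,L1,L2,L3,L4,L5,L6,L4,L8,L0,L1,L2,L3,L1,L14,L0,L3,L5,L4,L8,L8,L14]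
      [L0,L1,L2,L3,L4,L5,L6,L4,L5,L0,L1,L2,L3,L1,L2,L0,L3,L5,L4,L5,L5,L2] True,
    Pattern [L0,L1,L2,L3,L4,L5,L3,L4,L8,L0,L1,L2,L3,L1,L14,L0,L3,L5,L4,L8,L8,L14]
      [L0,L1,L2,L3,L4,L5,L6,L4,L8,L0,L1,L2,L3,L1,L14,L0,L3,L5,L4,L8,L8,L14]
      [L0,L1,L0,L3,L4,L5,L6,L4,L5,L0,L1,L0,L3,L1,L0,L0,L3,L5,L4,L5,L5,L0] True,
    Pattern [L0,L1,L0,L3,L3,L5,L3,L3,L8,L0,L1,L0,L3,L1,L5,L0,L3,L5,L3,L8,L8,L5]
      [L0,L1,L2,L3,L4,L5,L6,L4,L8,L0,L1,L2,L3,L1,L14,L0,L3,L5,L4,L8,L8,L14]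
      [L0,L1,L2,L3,L4,L5,L6,L4,L5,L0,L1,L2,L3,L1,L2,L0,L3,L5,L4,L5,L5,L2] True,
    Pattern [L0,L1,L2,L3,L4,L5,L3,L4,L8,L0,L1,L2,L3,L1,L14,L0,L3,L5,L4,L8,L8,L14]
      [L0,L1,L2,L3,L4,L5,L6,L4,L8,L0,L1,L2,L3,L1,L14,L0,L3,L5,L4,L8,L8,L14]
      [L0,L1,L0,L3,L1,L5,L6,L1,L5,L0,L1,L0,L3,L1,L0,L0,L3,L5,L1,L5,L5,L0] True,
    Pattern [L0,L1,L0,L3,L3,L3,L3,L3,L1,L0,L1,L0,L3,L1,L3,L0,L3,L3,L3,L1,L1,L3]
      [L0,L1,L2,L3,L4,L5,L6,L4,L8,L0,L1,L2,L3,L1,L14,L0,L3,L5,L4,L8,L8,L14]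
      [L0,L1,L2,L3,L4,L5,L6,L4,L8,L0,L1,L2,L3,L1,L2,L0,L3,L5,L4,L8,L8,L2] True,
    Pattern [L0,L1,L2,L3,L4,L5,L3,L4,L8,L0,L1,L2,L3,L1,L14,L0,L3,L5,L4,L8,L8,L14]
      [L0,L1,L2,L3,L4,L5,L6,L4,L8,L0,L1,L2,L3,L1,L14,L0,L3,L5,L4,L8,L8,L14]
      [L0,L1,L0,L3,L1,L1,L0,L1,L1,L0,L1,L0,L3,L1,L0,L0,L3,L1,L1,L1,L1,L0] True,
    Pattern [L0,L1,L0,L0,L0,L0,L0,L0,L1,L0,L1,L0,L0,L1,L0,L0,L0,L0,L0,L1,L1,L0]
      [L0,L1,L2,L3,L4,L5,L6,L4,L8,L0,L1,L2,L3,L1,L14,L0,L3,L5,L4,L8,L8,L14]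
      [L0,L1,L2,L3,L4,L5,L6,L4,L8,L0,L1,L2,L3,L1,L14,L0,L3,L5,L4,L8,L8,L14] True,
    Pattern [L0,L1,L0,L3,L4,L5,L3,L4,L8,L0,L1,L0,L3,L1,L5,L0,L3,L5,L4,L8,L8,L5]
      [L0,L1,L2,L3,L4,L5,L6,L4,L8,L0,L1,L2,L3,L1,L14,L0,L3,L5,L4,L8,L8,L14]
      [L0,L1,L2,L3,L4,L5,L6,L4,L5,L0,L1,L2,L3,L1,L2,L0,L3,L5,L4,L5,L5,L2] True,
    Pattern [L0,L1,L2,L3,L4,L5,L3,L4,L8,L0,L1,L2,L3,L1,L14,L0,L3,L5,L4,L8,L8,L14]
      [L0,L1,L2,L3,L4,L5,L6,L4,L8,L0,L1,L2,L3,L1,L14,L0,L3,L5,L4,L8,L8,L14]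
      [L0,L1,L0,L3,L1,L5,L0,L1,L5,L0,L1,L0,L3,L1,L0,L0,L3,L5,L1,L5,L5,L0] True,
    Pattern [L0,L1,L0,L3,L3,L5,L3,L3,L8,L0,L1,L0,L3,L1,L5,L0,L3,L5,L3,L8,L8,L5]
      [L0,L1,L2,L3,L4,L5,L6,L4,L8,L0,L1,L2,L3,L1,L14,L0,L3,L5,L4,L8,L8,L14]
      [L0,L1,L2,L3,L4,L5,L6,L4,L8,L0,L1,L2,L3,L1,L2,L0,L3,L5,L4,L8,L8,L2] True,
    Pattern [L0,L1,L2,L3,L4,L5,L6,L4,L8,L0,L1,L2,L3,L1,L14,L0,L3,L5,L4,L8,L8,L14]
      [L0,L1,L2,L3,L4,L5,L6,L4,L8,L0,L1,L2,L3,L1,L14,L0,L3,L5,L4,L8,L8,L14]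
      [L0,L1,L0,L0,L1,L1,L0,L1,L1,L0,L1,L0,L0,L1,L0,L0,L0,L1,L1,L1,L1,L0] True,
    Pattern [L0,L1,L2,L3,L4,L5,L3,L4,L8,L0,L1,L2,L3,L1,L14,L0,L3,L5,L4,L8,L8,L14]
      [L0,L1,L2,L3,L4,L5,L6,L4,L8,L0,L1,L2,L3,L1,L14,L0,L3,L5,L4,L8,L8,L14]
      [L0,L0,L2,L3,L4,L5,L6,L4,L5,L0,L0,L2,L3,L0,L2,L0,L3,L5,L4,L5,L5,L2] True]"

lemma square_patterns_closed: "\<forall>P\<in>set square_patterns. \<forall>P'\<in>set (desubst P). P' \<in> set square_patterns"
  by code_simp

lemma gamma_square_pattern_in_square_patterns: "gamma_square_pattern \<in> set square_patterns"
  by code_simp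

lemma pattern_bodies_separate_factors9:
  "\<forall>b\<in>set (remdups (map body square_patterns)).
     set (map (map (color b)) even_factors9) \<inter> set (map (map (color b)) odd_factors9) = {}"
  by code_simp

lemma no_short_pattern_factors20:
  "\<forall>P\<in>set square_patterns. \<forall>n\<in>set [5..<10]. (\<forall>t\<in>set factors20. \<not> occurs P ((!) t) n 1) \<and>
     \<not> occurs P ((!) (map letter_of (take 20 ((q_star ^^ 5) [0])))) n 0"
  by code_simp

lemma pattern_body_parity:
  assumes "P \<in> set square_patterns"
    and "map (color (body P)) (window p 9) = map (color (body P)) (window p' 9)"
  shows "even p \<longleftrightarrow> even p'"
proof (rule ccontr)
  assume parity: "even p \<noteq> even p'"
  define f where "f = map (color (body P))"
  have "f (window p 9) \<in> f ` set (if even p then even_factors9 else odd_factors9)"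
    and "f (window p' 9) \<in> f ` set (if even p' then even_factors9 else odd_factors9)"
    using window9_parity by blast+
  moreover have "f ` set even_factors9 \<inter> f ` set odd_factors9 = {}"
    using pattern_bodies_separate_factors9 assms(1) by (simp add: f_def)
  ultimately show False
    using parity assms(2) by (auto simp: f_def split: if_splits)
qed

lemma map_color_window_eq:
  "\<forall>j<k. agree c qword n (i + j) \<Longrightarrow> map (color c) (window i k) = map (color c) (window (i + n) k)"
  by (simp add: list_eq_iff_nth_eq agree_def add_ac)

lemma occurs_even_period:
  assumes "P \<in> set square_patterns" and "10 \<le> n" and "occurs P qword n x"
  shows "even n"
proof -
  obtain a b c s where P: "P = Pattern a b c s"
    by (cases P)
  have "\<forall>j<9. agree b qword n (x + j)"
    using assms(2,3) by (cases s) (auto simp: P)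
  then have "even x \<longleftrightarrow> even (x + n)"
    using assms(1) by (intro pattern_body_parity[of P]) (simp_all add: P map_color_window_eq)
  then show ?thesis
    by auto
qed

lemma occurs_shift: "occurs P w n (i + x) \<Longrightarrow> occurs P (\<lambda>j. w (i + j)) n x"
  by (cases P; cases x) (auto simp: agree_def add.assoc)

lemma occurs_cong:
  assumes "\<forall>j \<le> x + 2 * n. w j = w' j"
  shows "occurs P w n x \<longleftrightarrow> occurs P w' n x"
proof -
  have "agree c w n i \<longleftrightarrow> agree c w' n i" if "i + n \<le> x + 2 * n" for c i
    using assms that by (simp add: agree_def)
  then show ?thesis
    by (cases P) (simp add: of_bool_def)
qed

lemma no_short_pattern:
  assumes "P \<in> set square_patterns" and "5 \<le> n" and "n < 10"
  shows "\<not> occurs P qword n x"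
proof
  assume occ: "occurs P qword n x"
  (* The window of length 20 starting at x - 1 contains the whole occurrence; for x = 0 it is the
     prefix of the word, where the left condition is void. *)
  define i where "i = x - 1"
  define r where "r = x - i"
  have "occurs P (\<lambda>j. qword (i + j)) n r"
    using occ occurs_shift[of P qword n i r] by (simp add: r_def i_def)
  moreover have "\<forall>j \<le> r + 2 * n. window i 20 ! j = qword (i + j)"
    using assms(3) by (simp add: r_def i_def)
  ultimately have occ': "occurs P ((!) (window i 20)) n r"
    using occurs_cong[of r n "(!) (window i 20)" "\<lambda>j. qword (i + j)" P] by simp
  have "n \<in> set [5..<10]"
    using assms(2,3) by (simp only: set_upt atLeastLessThan_iff)
  then have checked: "(\<forall>t\<in>set factors20. \<not> occurs P ((!) t) n 1) \<and>
      \<not> occurs P ((!) (map letter_of (take 20 ((q_star ^^ 5) [0])))) n 0"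
    using no_short_pattern_factors20 assms(1) by blast
  show False
  proof (cases "x = 0")
    case True
    then show False
      using occ' checked by (simp add: r_def i_def window_0_20)
  next
    case False
    then show False
      using occ' checked window_in_factors20[of i] by (simp add: r_def i_def)
  qed
qed

lemma no_pattern_occurs: "P \<in> set square_patterns \<Longrightarrow> 5 \<le> n \<Longrightarrow> \<not> occurs P qword n x"
proof (induction n arbitrary: P x rule: less_induct)
  case (less n)
  show ?case
  proof
    assume occ: "occurs P qword n x"
    show False
    proof (cases "n < 10")
      case True
      then show False
        using no_short_pattern less.prems occ by blast
    next
      case False
      then have "even n"
        using occurs_even_period less.prems(1) occ by simp
      then obtain m where n: "n = 2 * m" ..
      then have "0 < m"
        using False by simp
      obtain P' x' where P': "P' \<in> set (desubst P)" and occ': "occurs P' qword m x'"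
      proof (cases "even x")
        case True
        then show ?thesis
          using that occurs_desubst_even[of P m "x div 2"] occ n \<open>0 < m\<close> by auto
      next
        case False
        then have "x = Suc (2 * (x div 2))"
          by simp
        then show ?thesis
          using that occurs_desubst_odd[of P m "x div 2"] occ n \<open>0 < m\<close> by auto
      qed
      moreover have "P' \<in> set square_patterns"
        using square_patterns_closed less.prems(1) P' by blast
      moreover have "m < n" and "5 \<le> m"
        using False n by simp_all
      ultimately show False
        using less.IH by blast
    qed
  qed
qed

lemma occurs_gamma_square_pattern_iff:
  "occurs gamma_square_pattern qword n x \<longleftrightarrow> (\<forall>j<n. gamma (q_omega (x + j)) = gamma (q_omega (x + n + j)))"
  by (simp add: gamma_square_pattern_def agree_def color_canon_eq_iff gamma_q_omega add_ac)

section \<open>Squares in the coded fixed point\<close>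

lemma square_in_gamma_q_omega:
  assumes "x \<noteq> []" and "factor_of (x @ x) (gamma \<circ> q_omega)"
  shows "x \<in> {[0], [1], [1, 0]}"
proof -
  define n where "n = length x"
  obtain i where i: "\<forall>j < n + n. gamma (q_omega (i + j)) = (x @ x) ! j"
    using assms(2) by (auto simp: factor_of_def n_def)
  have first: "gamma (q_omega (i + j)) = x ! j" if "j < n" for j
    using i[rule_format, of j] that by (simp add: nth_append n_def)
  have second: "gamma (q_omega (i + n + j)) = x ! j" if "j < n" for j
    using i[rule_format, of "n + j"] that by (simp add: nth_append n_def add.assoc)
  have square: "\<forall>j<n. gamma (q_omega (i + j)) = gamma (q_omega (i + n + j))"
    using first second by simp
  show ?thesis
  proof (cases "n < 10")
    case True
    have "map (gamma \<circ> q_omega) [i..<i + n] = x"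
    proof (rule nth_equalityI)
      show "length (map (gamma \<circ> q_omega) [i..<i + n]) = length x"
        by (simp add: n_def)
    next
      fix j
      assume "j < length (map (gamma \<circ> q_omega) [i..<i + n])"
      then show "map (gamma \<circ> q_omega) [i..<i + n] ! j = x ! j"
        using first by simp
    qed
    moreover have "0 < n"
      using assms(1) by (simp add: n_def)
    ultimately show ?thesis
      using small_square[OF _ True square] by simp
  next
    case False
    then have "occurs gamma_square_pattern qword n i" and "5 \<le> n"
      using square occurs_gamma_square_pattern_iff by simp_all
    then show ?thesis
      using no_pattern_occurs[OF gamma_square_pattern_in_square_patterns] by blast
  qed
qed

lemma factor_ofI:
  assumes "map u [i..<i + length xs] = xs"
  shows "factor_of xs u"
proof -
  have "u (i + j) = xs ! j" if "j < length xs" for j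
    using nth_map_upt[of j "i + length xs" i u] assms that by simp
  then show ?thesis
    unfolding factor_of_def by blast
qed

lemma gamma_q_omega_prefix: "map (gamma \<circ> q_omega) [0..<8] = [1, 1, 0, 1, 0, 0, 1, 1]"
proof -
  have "map (gamma \<circ> q_omega) [0..<8] = map gamma ((q_star ^^ 3) [0])"
    by (simp add: list_eq_iff_nth_eq length_q_iter q_omega_eq_nth_q_iter[where m = 3])
  also have "\<dots> = [1, 1, 0, 1, 0, 0, 1, 1]"
    by code_simp
  finally show ?thesis .
qed

lemma factor_of_gamma_q_omega_prefix:
  assumes "i + length xs \<le> 8" and "take (length xs) (drop i [1, 1, 0, 1, 0, 0, 1, 1]) = xs"
  shows "factor_of xs (gamma \<circ> q_omega)"
proof (rule factor_ofI)
  have "map (gamma \<circ> q_omega) [i..<i + length xs] =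
      take (length xs) (drop i (map (gamma \<circ> q_omega) [0..<8]))"
    using assms(1) by (simp add: take_map drop_map take_upt)
  then show "map (gamma \<circ> q_omega) [i..<i + length xs] = xs"
    using assms(2) by (simp only: gamma_q_omega_prefix)
qed

theorem theorem6:
  shows "{x. x \<noteq> [] \<and> factor_of (x @ x) (gamma \<circ> q_omega)} = {[0], [1], [1,0]}
         \<and> weight 22 q = 44"
proof
  have "factor_of ([0] @ [0]) (gamma \<circ> q_omega)"
    by (rule factor_of_gamma_q_omega_prefix[where i = 4]) simp_all
  moreover have "factor_of ([1] @ [1]) (gamma \<circ> q_omega)"
    by (rule factor_of_gamma_q_omega_prefix[where i = 0]) simp_all
  moreover have "factor_of ([1, 0] @ [1, 0]) (gamma \<circ> q_omega)"
    by (rule factor_of_gamma_q_omega_prefix[where i = 1]) simp_all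
  ultimately show "{x. x \<noteq> [] \<and> factor_of (x @ x) (gamma \<circ> q_omega)} = {[0], [1], [1,0]}"
    using square_in_gamma_q_omega by auto
  have "(\<Sum>a<22. length (q a)) = (\<Sum>a<(22::nat). 2)"
    by (rule sum.cong) (simp_all add: length_q)
  then show "weight 22 q = 44"
    by (simp add: weight_def)
qed

end
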